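(* Let $a,M$ be positive integers and $\lambda=\lambda_1/\lambda_2$ with $\lambda_1,\lambda_2$ coprime integers, $\lambda_2\ge1$. Let $L_{\min}=\lambda_2\,\mathrm{lcm}(a,M)$ and $c=\gcd(a,M)=\prod_{j=1}^Jp_j^{\gamma_j}$ (prime factorization). Let $c_1=\prod_{j=1}^Jp_j^{\sigma_j}$, where $\sigma_j=\gamma_j$ if $\gcd(\lambda_2,p_j)=1$ and $\sigma_j=0$ otherwise (i.e. $c_1$ is the largest divisor of $c$ coprime to $\lambda_2$). If $L=n\,L_{\min}\,\frac{c}{c_1}$ for some $n\in\mathbb{N}$, then, with $b=L/M$, $s=\lambda b$ and $\Lambda\le\mathbb{Z}_L^2$ the subgroup generated by $(a,s)^T$ and $(0,b)^T$, the frequency shear can be chosen to be $0$; that is, there exists $s_1\in\mathbb{Z}_L$ such that $\begin{pmatrix}1&0\\ -s_1&1\end{pmatrix}\Lambda=D\mathbb{Z}_L^2$ for some diagonal matrix $D\in\mathbb{Z}_L^{2\times2}$ (equivalently, $\Lambda=U_{0,s_1}\tilde\Lambda$ for a separable lattice $\tilde\Lambda$, where $U_{s_0,s_1}=\begin{pmatrix}1&-s_0\\-s_1&s_0s_1+1\end{pmatrix}$).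
   Context: All arithmetic in $\mathbb{Z}_L=\mathbb{Z}/L\mathbb{Z}$; $A\mathbb{Z}_L^2=\{Az\bmod L:z\in\mathbb{Z}_L^2\}$ and a lattice is separable if it equals $D\mathbb{Z}_L^2$ for a diagonal $D$. In the paper's terminology, every lattice can be written as $U_{s_0,s_1}D\mathbb{Z}_L^2$ with $U_{s_0,s_1}=S_{-s_1}F^{-1}S_{s_0}F$ ($F=\begin{pmatrix}0&-1\\1&0\end{pmatrix}$, $S_c=\begin{pmatrix}1&0\\c&1\end{pmatrix}$); $s_0$ is the frequency shear and $s_1$ the time shear, and "the frequency shear can be chosen to be 0" means such a representation exists with $s_0=0$. Note $L$ of the given form is a multiple of $L_{\min}$, so $a\mid L$, $M\mid L$, and $\frac{L}{a}\lambda,\frac{L}{M}\lambda\in\mathbb{Z}$. *)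

theory Defs
  imports "HOL-Computational_Algebra.Primes"
begin

text \<open>Elements of Z_L^2 are represented by pairs of integers reduced mod L
  (canonical representatives in 0..L-1). A 2x2 matrix (p q; r t) over Z_L
  is represented by the integer quadruple (p, q, r, t).\<close>

type_synonym mat2 = "int \<times> int \<times> int \<times> int"

definition modvec :: "int \<Rightarrow> int \<times> int \<Rightarrow> int \<times> int" where
  "modvec L z = (fst z mod L, snd z mod L)"

definition mat2_apply :: "mat2 \<Rightarrow> int \<times> int \<Rightarrow> int \<times> int" where
  "mat2_apply A z = (case A of (p, q, r, t) \<Rightarrow>
      (p * fst z + q * snd z, r * fst z + t * snd z))"

definition ZL2 :: "int \<Rightarrow> (int \<times> int) set" where
  "ZL2 L = {z. 0 \<le> fst z \<and> fst z < L \<and> 0 \<le> snd z \<and> snd z < L}"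

definition mat_image :: "int \<Rightarrow> mat2 \<Rightarrow> (int \<times> int) set \<Rightarrow> (int \<times> int) set" where
  "mat_image L A S = (\<lambda>z. modvec L (mat2_apply A z)) ` S"

definition gen_subgroup :: "int \<Rightarrow> int \<times> int \<Rightarrow> int \<times> int \<Rightarrow> (int \<times> int) set" where
  "gen_subgroup L u v =
     {modvec L (k * fst u + m * fst v, k * snd u + m * snd v) | k m :: int. True}"

definition diag_lattice :: "int \<Rightarrow> int \<Rightarrow> int \<Rightarrow> (int \<times> int) set" where
  "diag_lattice L d1 d2 = mat_image L (d1, 0, 0, d2) (ZL2 L)"

definition coprime_part :: "nat \<Rightarrow> nat \<Rightarrow> nat" where
  "coprime_part c l = (\<Prod>p \<in> {p \<in> prime_factors c. coprime l p}. p ^ multiplicity p c)"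

end

theory Submission
  imports Defs
begin

text \<open>The time shear \<open>S\<^sub>-\<^sub>s\<^sub>1\<close> maps the generators \<open>(a, s)\<close>, \<open>(0, b)\<close> to \<open>(a, s - s\<^sub>1 a)\<close>, \<open>(0, b)\<close>,
  and the lattice they generate is \<open>diag(a, b) \<int>\<^sub>L\<^sup>2\<close> as soon as \<open>b\<close> divides \<open>s - s\<^sub>1 a\<close>; by Bezout
  such an \<open>s\<^sub>1\<close> exists whenever \<open>gcd(a, b)\<close> divides \<open>s\<close> (and \<open>b\<close> divides \<open>L\<close>).
  Writing \<open>L = \<lambda>\<^sub>2 M q\<close> we get \<open>b = \<lambda>\<^sub>2 q\<close>, \<open>s = \<lambda>\<^sub>1 q\<close> and \<open>c\<^sub>1 q = n a\<close>, so \<open>gcd(a, b)\<close> divides both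
  \<open>c\<^sub>1 q\<close> and \<open>\<lambda>\<^sub>2 q\<close>, hence divides \<open>q\<close> because \<open>c\<^sub>1\<close> is coprime to \<open>\<lambda>\<^sub>2\<close>.\<close>

lemma linear_comb_mod_eq:
  fixes p q x y L :: int
  shows "(p * (x mod L) + q * (y mod L)) mod L = (p * x + q * y) mod L"
  by (metis mod_add_eq mod_mult_right_eq)

lemma modvec_mat2_apply_modvec:
  "modvec L (mat2_apply A (modvec L z)) = modvec L (mat2_apply A z)"
  by (cases A) (simp add: modvec_def mat2_apply_def linear_comb_mod_eq)

lemma gen_subgroup_eq_range:
  "gen_subgroup L u v =
     range (\<lambda>(k, m). modvec L (k * fst u + m * fst v, k * snd u + m * snd v))"
  unfolding gen_subgroup_def by (auto intro: range_eqI[where x = "(k, m)" for k m])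

lemma mat_image_gen_subgroup:
  "mat_image L A (gen_subgroup L u v) = gen_subgroup L (mat2_apply A u) (mat2_apply A v)"
proof -
  have lin: "mat2_apply A (k * fst u + m * fst v, k * snd u + m * snd v)
      = (k * fst (mat2_apply A u) + m * fst (mat2_apply A v),
         k * snd (mat2_apply A u) + m * snd (mat2_apply A v))" for k m
    by (cases A) (simp add: mat2_apply_def algebra_simps)
  show ?thesis
    unfolding mat_image_def gen_subgroup_eq_range image_image
    by (simp add: modvec_mat2_apply_modvec lin case_prod_beta)
qed

lemma diag_lattice_eq_gen_subgroup:
  assumes "L > 0"
  shows "diag_lattice L (d1 mod L) (d2 mod L) = gen_subgroup L (d1, 0) (0, d2)"
proof -
  have "diag_lattice L (d1 mod L) (d2 mod L) = {modvec L (k * d1, m * d2) | k m. True}"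
  proof (intro set_eqI iffI)
    fix z assume "z \<in> diag_lattice L (d1 mod L) (d2 mod L)"
    then show "z \<in> {modvec L (k * d1, m * d2) | k m. True}"
      by (auto simp: diag_lattice_def mat_image_def mat2_apply_def modvec_def mod_simps ac_simps)
  next
    fix z assume "z \<in> {modvec L (k * d1, m * d2) | k m. True}"
    then obtain k m where z: "z = modvec L (k * d1, m * d2)" by blast
    have "(k mod L, m mod L) \<in> ZL2 L" using assms by (simp add: ZL2_def)
    moreover have "z = modvec L (mat2_apply (d1 mod L, 0, 0, d2 mod L) (k mod L, m mod L))"
      by (simp add: z modvec_def mat2_apply_def mod_simps ac_simps)
    ultimately show "z \<in> diag_lattice L (d1 mod L) (d2 mod L)"
      unfolding diag_lattice_def mat_image_def by blast
  qed
  also have "\<dots> = gen_subgroup L (d1, 0) (0, d2)"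
    by (simp add: gen_subgroup_def)
  finally show ?thesis .
qed

lemma gen_subgroup_reduce_second_coord:
  assumes "B dvd t"
  shows "gen_subgroup L (A, t) (0, B) = gen_subgroup L (A, 0) (0, B)"
proof -
  obtain q where t: "t = B * q" using assms by blast
  have "(k * A, k * t + m * B) = (k * A, (k * q + m) * B)" for k m
    by (simp add: t algebra_simps)
  moreover have "(k * A, m * B) = (k * A, k * t + (m - k * q) * B)" for k m
    by (simp add: t algebra_simps)
  ultimately show ?thesis
    unfolding gen_subgroup_def by (auto, metis+)
qed

lemma exists_time_shear:
  fixes A B s L :: int
  assumes "gcd A B dvd s" and "B dvd L" and "L > 0"
  shows "\<exists>s1 \<in> {0..<L}. B dvd s - s1 * A"
proof -
  obtain t where s: "s = gcd A B * t" using assms(1) by blast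
  obtain u v where uv: "u * A + v * B = gcd A B" using bezout_int by blast
  define s1 where "s1 = (t * u) mod L"
  have "L dvd t * u - s1" unfolding s1_def by (simp add: mod_eq_dvd_iff)
  then have "B dvd (t * u - s1) * A" using assms(2) by (simp add: dvd_trans)
  moreover have "s - s1 * A = (t * u - s1) * A + B * (t * v)"
    unfolding s uv[symmetric] by (simp add: algebra_simps)
  ultimately have "B dvd s - s1 * A" by simp
  moreover have "s1 \<in> {0..<L}" unfolding s1_def using assms(3) by simp
  ultimately show ?thesis by blast
qed

lemma coprime_part_dvd:
  assumes "c > 0" shows "coprime_part c l dvd c"
proof -
  have "coprime_part c l dvd (\<Prod>p\<in>prime_factors c. p ^ multiplicity p c)"
    unfolding coprime_part_def by (rule prod_dvd_prod_subset) auto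
  then show ?thesis using prod_prime_factors[of c] assms by simp
qed

lemma coprime_coprime_part: "coprime (coprime_part c l) l"
  unfolding coprime_part_def by (rule prod_coprime_left) (auto simp: coprime_commute)

lemma dvd_of_dvd_coprime_multiples:
  fixes x y c l :: nat
  assumes "x dvd c * y" and "x dvd l * y" and "coprime c l"
  shows "x dvd y"
proof -
  have "x dvd gcd (y * c) (y * l)" using assms(1,2) by (simp add: ac_simps)
  also have "gcd (y * c) (y * l) = y"
    using assms(3) by (simp add: gcd_mult_distrib_nat[symmetric])
  finally show ?thesis .
qed

lemma minimal_length_factorization:
  fixes a M lam2 n :: nat
  assumes "M > 0"
  obtains q where "n * (lam2 * lcm a M) * (gcd a M div coprime_part (gcd a M) lam2)
                     = lam2 * M * q"
    and "coprime_part (gcd a M) lam2 * q = n * a"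
proof (cases "a = 0")
  case True
  then show ?thesis using that[of 0] by simp
next
  case False
  define c where "c = gcd a M"
  define c1 where "c1 = coprime_part c lam2"
  obtain k where ck: "c = c1 * k"
    using coprime_part_dvd[of c lam2] False unfolding c_def c1_def by fastforce
  have "c1 > 0" using ck False by (cases c1) (auto simp: c_def)
  then have k: "c div c1 = k" using ck by simp
  obtain r where r: "lcm a M = M * r" by (meson dvd_lcm2 dvdE)
  have "lcm a M * gcd a M = a * M" by (simp add: lcm_gcd_prod)
  then have "M * (r * c) = M * a" using r c_def by (simp add: mult.commute mult.left_commute)
  then have rc: "r * c = a" using assms by simp
  show ?thesis
  proof (rule that[of "n * r * k"], fold c_def c1_def)
    show "n * (lam2 * lcm a M) * (c div c1) = lam2 * M * (n * r * k)"
      using r k by (simp add: ac_simps)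
    have "c1 * (n * r * k) = n * (r * c)" using ck by (simp add: ac_simps)
    then show "c1 * (n * r * k) = n * a" using rc by simp
  qed
qed

theorem proposition3p8:
  fixes a M lam2 n L b :: nat and lam1 s :: int
  assumes "a > 0" and "M > 0"
    and "lam2 \<ge> 1" and "coprime lam1 (int lam2)"
    and "n \<ge> 1"
    and "L = n * (lam2 * lcm a M) * (gcd a M div coprime_part (gcd a M) lam2)"
    and "b = L div M"
    and "s = lam1 * int (L div (lam2 * M))"
  shows "\<exists>s1 \<in> {0..<int L}. \<exists>d1 \<in> {0..<int L}. \<exists>d2 \<in> {0..<int L}.
           mat_image (int L) (1, 0, - s1, 1) (gen_subgroup (int L) (int a, s) (0, int b))
             = diag_lattice (int L) d1 d2"
proof -
  obtain q where L: "L = lam2 * M * q" and q: "coprime_part (gcd a M) lam2 * q = n * a"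
    using minimal_length_factorization[OF assms(2)] assms(6) by metis
  have b: "b = lam2 * q" and s: "s = lam1 * int q"
    using assms(2,3,7,8) by (simp_all add: L)
  have "L > 0" using L q assms(1-3,5) by (cases q) auto
  have "gcd a b dvd q"
  proof (rule dvd_of_dvd_coprime_multiples[OF _ _ coprime_coprime_part])
    show "gcd a b dvd coprime_part (gcd a M) lam2 * q" unfolding q by simp
    show "gcd a b dvd lam2 * q" unfolding b[symmetric] by simp
  qed
  then have "gcd (int a) (int b) dvd s" unfolding s by (simp add: gcd_int_def)
  moreover have "int b dvd int L" by (simp add: L b)
  ultimately obtain s1 where s1: "s1 \<in> {0..<int L}" and "int b dvd s - s1 * int a"
    using exists_time_shear[of "int a" "int b" s "int L"] \<open>L > 0\<close> by auto
  have "mat_image (int L) (1, 0, - s1, 1) (gen_subgroup (int L) (int a, s) (0, int b))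
      = gen_subgroup (int L) (int a, s - s1 * int a) (0, int b)"
    by (simp add: mat_image_gen_subgroup mat2_apply_def)
  also have "\<dots> = gen_subgroup (int L) (int a, 0) (0, int b)"
    by (rule gen_subgroup_reduce_second_coord) fact
  also have "\<dots> = diag_lattice (int L) (int a mod int L) (int b mod int L)"
    using \<open>L > 0\<close> by (simp add: diag_lattice_eq_gen_subgroup)
  finally have "mat_image (int L) (1, 0, - s1, 1) (gen_subgroup (int L) (int a, s) (0, int b))
      = diag_lattice (int L) (int a mod int L) (int b mod int L)" .
  moreover have "int a mod int L \<in> {0..<int L}" and "int b mod int L \<in> {0..<int L}"
    using \<open>L > 0\<close> by simp_all
  ultimately show ?thesis using s1 by blast
qed

end
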